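(* Let $R\subseteq\mathbb N$ be sparse and let $A,B$ be operators on $R$ with $A\neq_R 0$. Then there is $\Delta_0\in\mathbb N$ such that for all $\Delta\ge\Delta_0$ and all $z\in R$, $|A(\sigma^\Delta z)|>B z$.
   Context: Let $R\subseteq\mathbb N$ be infinite, enumerated increasingly as $(r_n)_{n\in\mathbb N}$; $\sigma:R\to R$ is the successor map $\sigma(r_n)=r_{n+1}$ and $\sigma^k$ its $k$-fold iterate ($\sigma^0=\mathrm{id}$). An operator on $R$ is a function $R\to\mathbb Z$, $z\mapsto a_m\sigma^m(z)+\dots+a_0\sigma^0(z)$ with $a_i\in\mathbb Z$. For an operator $A$: $A=_R0$ if $Az=0$ for all $z\in R$; $A>_R0$ (resp. $A<_R0$) if $Az>0$ (resp. $Az<0$) for all but finitely many $z\in R$; $A\ne_R0$ means not $A=_R0$. $R$ is sparse if every operator $A$ satisfies (S1) $A=_R0$ or $A>_R0$ or $A<_R0$; and (S2) if $A>_R0$ then there is $\Delta\in\mathbb N$ with $A(\sigma^\Delta z)>z$ for all $z\in R$. *)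

theory Defs
  imports Main "HOL-Library.Infinite_Set"
begin

text \<open>Enumeration r_n = enumerate R n of an infinite R, successor map sigma(r_n) = r_(n+1).\<close>
definition sigma :: "nat set \<Rightarrow> nat \<Rightarrow> nat" where
  "sigma R z = enumerate R (Suc (inv_into UNIV (enumerate R) z))"

text \<open>An operator a_m sigma^m + ... + a_0 sigma^0 is given by its coefficient list [a_0, ..., a_m].\<close>
definition op_apply :: "nat set \<Rightarrow> int list \<Rightarrow> nat \<Rightarrow> int" where
  "op_apply R A z = (\<Sum>i<length A. A ! i * int ((sigma R ^^ i) z))"

definition op_zero :: "nat set \<Rightarrow> int list \<Rightarrow> bool" where
  "op_zero R A \<longleftrightarrow> (\<forall>z\<in>R. op_apply R A z = 0)"

definition op_pos :: "nat set \<Rightarrow> int list \<Rightarrow> bool" where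
  "op_pos R A \<longleftrightarrow> finite {z\<in>R. \<not> op_apply R A z > 0}"

definition op_neg :: "nat set \<Rightarrow> int list \<Rightarrow> bool" where
  "op_neg R A \<longleftrightarrow> finite {z\<in>R. \<not> op_apply R A z < 0}"

definition sparse :: "nat set \<Rightarrow> bool" where
  "sparse R \<longleftrightarrow>
     (\<forall>A. op_zero R A \<or> op_pos R A \<or> op_neg R A) \<and>
     (\<forall>A. op_pos R A \<longrightarrow> (\<exists>\<Delta>::nat. \<forall>z\<in>R. op_apply R A ((sigma R ^^ \<Delta>) z) > int z))"

end

theory Submission
  imports Defs
begin

(* By sparseness a positive operator A satisfies A(sigma^D w) > w for some D. Applying this to
   the positive operator w \<mapsto> A(sigma^D (sigma w)) - k w bootstraps it to A(sigma^D' w) > (k+1) w,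
   so A eventually dominates every linear function k w. Since B z is at most c sigma^m z, with m
   the order of B and c the sum of its absolute coefficients, taking k = c and \<Delta> \<ge> D + m gives
   A(sigma^\<Delta> z) > B z. A negative operator A is handled through -A. *)

lemma sigma_in:
  assumes "infinite R" "z \<in> R"
  shows "sigma R z \<in> R"
  unfolding sigma_def using assms(1) enumerate_in_set by blast

lemma sigma_gt:
  assumes "infinite R" "z \<in> R"
  shows "z < sigma R z"
proof -
  have "z \<in> range (enumerate R)" using assms range_enumerate by blast
  then have "enumerate R (inv_into UNIV (enumerate R) z) = z" by (rule f_inv_into_f)
  then show ?thesis
    unfolding sigma_def using enumerate_mono[OF lessI assms(1)] by metis
qed

lemma funpow_sigma_in:
  assumes "infinite R" "z \<in> R"
  shows "(sigma R ^^ n) z \<in> R"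
  by (induction n) (simp_all add: assms sigma_in)

lemma funpow_sigma_ge:
  assumes "infinite R" "z \<in> R"
  shows "z \<le> (sigma R ^^ n) z"
proof (induction n)
  case (Suc n)
  then show ?case
    using sigma_gt[OF assms(1) funpow_sigma_in[OF assms, of n]] by simp
qed simp

lemma funpow_sigma_mono:
  assumes "infinite R" "z \<in> R" "i \<le> j"
  shows "(sigma R ^^ i) z \<le> (sigma R ^^ j) z"
proof -
  have "(sigma R ^^ j) z = (sigma R ^^ (j - i)) ((sigma R ^^ i) z)"
    using assms(3) by (metis funpow_add le_add_diff_inverse2 o_apply)
  then show ?thesis using funpow_sigma_ge[OF assms(1) funpow_sigma_in[OF assms(1,2)]] by simp
qed

lemma op_apply_Cons:
  "op_apply R (a # A) z = a * int z + op_apply R A (sigma R z)"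
  unfolding op_apply_def length_Cons sum.lessThan_Suc_shift
  by (simp add: funpow_Suc_right del: funpow.simps)

lemma op_apply_replicate_zero_append:
  "op_apply R (replicate D 0 @ A) z = op_apply R A ((sigma R ^^ D) z)"
  by (induction D arbitrary: z) (simp_all add: op_apply_Cons funpow_Suc_right del: funpow.simps)

lemma op_apply_map_uminus: "op_apply R (map uminus A) z = - op_apply R A z"
  unfolding op_apply_def by (simp add: sum_negf[symmetric])

lemma op_neg_iff_op_pos_map_uminus: "op_neg R A \<longleftrightarrow> op_pos R (map uminus A)"
  unfolding op_pos_def op_neg_def op_apply_map_uminus by simp

lemma op_pos_if_pos:
  assumes "\<And>z. z \<in> R \<Longrightarrow> op_apply R A z > 0"
  shows "op_pos R A"
proof -
  have "{z\<in>R. \<not> op_apply R A z > 0} = {}" using assms by auto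
  then show ?thesis unfolding op_pos_def by (metis finite.emptyI)
qed

lemma op_apply_le_abs_coeffs:
  assumes "infinite R" "z \<in> R"
  shows "op_apply R B z \<le> (\<Sum>i<length B. \<bar>B ! i\<bar>) * int ((sigma R ^^ length B) z)"
  unfolding op_apply_def sum_distrib_right
proof (rule sum_mono)
  fix i assume "i \<in> {..<length B}"
  then have "int ((sigma R ^^ i) z) \<le> int ((sigma R ^^ length B) z)"
    using funpow_sigma_mono[OF assms] by simp
  moreover have "B ! i * int ((sigma R ^^ i) z) \<le> \<bar>B ! i\<bar> * int ((sigma R ^^ i) z)"
    by (simp add: mult_right_mono)
  ultimately show "B ! i * int ((sigma R ^^ i) z) \<le> \<bar>B ! i\<bar> * int ((sigma R ^^ length B) z)"
    by (meson abs_ge_zero mult_left_mono order_trans)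
qed

lemma sparse_op_pos_dominates_linear:
  assumes inf: "infinite R" and sp: "sparse R" and pos: "op_pos R A"
  shows "\<exists>D. \<forall>w\<in>R. op_apply R A ((sigma R ^^ D) w) > int k * int w"
proof (induction k)
  case 0
  from sp pos obtain D where "\<forall>z\<in>R. op_apply R A ((sigma R ^^ D) z) > int z"
    unfolding sparse_def by blast
  then show ?case by (metis mult_zero_left of_nat_0 of_nat_0_le_iff order_le_less_trans)
next
  case (Suc k)
  then obtain D where D: "\<forall>w\<in>R. op_apply R A ((sigma R ^^ D) w) > int k * int w" by blast
  define L where "L = (- int k) # replicate D 0 @ A"
  have L: "op_apply R L w = op_apply R A ((sigma R ^^ D) (sigma R w)) - int k * int w" for w
    unfolding L_def by (simp add: op_apply_Cons op_apply_replicate_zero_append)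
  have "op_pos R L"
  proof (rule op_pos_if_pos)
    fix w assume w: "w \<in> R"
    have "int k * int w \<le> int k * int (sigma R w)"
      using sigma_gt[OF inf w] by (intro mult_left_mono) auto
    then show "op_apply R L w > 0" using D sigma_in[OF inf w] L[of w] by fastforce
  qed
  with sp obtain E where E: "\<forall>z\<in>R. op_apply R L ((sigma R ^^ E) z) > int z"
    unfolding sparse_def by blast
  have "op_apply R A ((sigma R ^^ (D + Suc E)) w) > int (Suc k) * int w" if w: "w \<in> R" for w
  proof -
    have "(sigma R ^^ D) (sigma R ((sigma R ^^ E) w)) = (sigma R ^^ (D + Suc E)) w"
      by (metis funpow_add funpow.simps(2) o_apply)
    moreover have "int k * int w \<le> int k * int ((sigma R ^^ E) w)"
      using funpow_sigma_ge[OF inf w] by (intro mult_left_mono) auto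
    ultimately show ?thesis using E w L[of "(sigma R ^^ E) w"] by (fastforce simp: algebra_simps)
  qed
  then show ?case by blast
qed

lemma sparse_op_pos_eventually_dominates:
  assumes inf: "infinite R" and sp: "sparse R" and pos: "op_pos R A"
  shows "\<exists>\<Delta>0. \<forall>\<Delta>\<ge>\<Delta>0. \<forall>z\<in>R. op_apply R A ((sigma R ^^ \<Delta>) z) > op_apply R B z"
proof -
  define c where "c = (\<Sum>i<length B. \<bar>B ! i\<bar>)"
  have c: "c \<ge> 0" unfolding c_def by (simp add: sum_nonneg)
  obtain D where D: "\<forall>w\<in>R. op_apply R A ((sigma R ^^ D) w) > c * int w"
    using sparse_op_pos_dominates_linear[OF inf sp pos, of "nat c"] c by auto
  have "op_apply R A ((sigma R ^^ \<Delta>) z) > op_apply R B z"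
    if \<Delta>: "D + length B \<le> \<Delta>" and z: "z \<in> R" for \<Delta> z
  proof -
    define w where "w = (sigma R ^^ (\<Delta> - D)) z"
    have "(sigma R ^^ \<Delta>) z = (sigma R ^^ D) w"
      unfolding w_def using \<Delta> by (metis funpow_add le_add_diff_inverse le_add1 o_apply order_trans)
    moreover have "w \<in> R" unfolding w_def using funpow_sigma_in[OF inf z] .
    moreover have "(sigma R ^^ length B) z \<le> w"
      unfolding w_def using funpow_sigma_mono[OF inf z] \<Delta> by simp
    then have "op_apply R B z \<le> c * int w"
      using op_apply_le_abs_coeffs[OF inf z, of B] c unfolding c_def[symmetric]
      by (meson mult_left_mono of_nat_le_iff order_trans)
    ultimately show ?thesis using D by fastforce
  qed
  then show ?thesis by blast
qed

theorem mainTheorem3: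
  fixes R :: "nat set" and A B :: "int list"
  assumes "infinite R" and "sparse R" and "\<not> op_zero R A"
  shows "\<exists>\<Delta>0::nat. \<forall>\<Delta>\<ge>\<Delta>0. \<forall>z\<in>R.
           \<bar>op_apply R A ((sigma R ^^ \<Delta>) z)\<bar> > op_apply R B z"
proof -
  have "op_pos R A \<or> op_pos R (map uminus A)"
    using assms(2,3) unfolding sparse_def op_neg_iff_op_pos_map_uminus by blast
  then show ?thesis
  proof
    assume "op_pos R A"
    from sparse_op_pos_eventually_dominates[OF assms(1,2) this, of B]
    show ?thesis by (meson abs_ge_self less_le_trans)
  next
    assume "op_pos R (map uminus A)"
    from sparse_op_pos_eventually_dominates[OF assms(1,2) this, of B]
    show ?thesis unfolding op_apply_map_uminus by (meson abs_ge_minus_self less_le_trans)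
  qed
qed

end
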